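(* Let $(b,c)$ be a locally finite and connected graph over a countable set $X$ with a cocompact action of a group $G$ such that $H_{b,c}$ is $G$-invariant, and fix $x_0\in X$. Let $\mathcal{K}$ be the closure in $C(X)$ of $\{f\in\mathcal{H}^+:f(x_0)=1\}$ and $\mathcal{M}=\{f\in\mathcal{K}: f\text{ multiplicative}\}$. Then $\mathcal{M}=\mathrm{ex}\,\overline{\mathrm{conv}}\,\mathcal{M}$, the set of extreme points of the closed convex hull of $\mathcal{M}$.
   Context: A graph over $X$ is $(b,c)$ with $b:X\times X\to[0,\infty)$, $c:X\to\mathbb{R}$, $\sum_yb(x,y)<\infty$ ($b$ need not be symmetric); locally finite: each $x$ has finitely many $y$ with $b(x,y)>0$; connected: any two points are joined by a finite sequence $y_1,\dots,y_n$ with $b(y_i,y_{i+1})>0$. $C(X)$ carries the product topology. $H_{b,c}f(x)=\sum_yb(x,y)(f(x)-f(y))+c(x)f(x)$ on $\mathrm{Dom}(H)=\{f:\sum_yb(x,y)|f(y)|<\infty\ \forall x\}$; $\mathcal{H}^+$: nonnegative, nonzero $f$ with $Hf=0$. $T_gf(x)=f(g^{-1}x)$; cocompact: $GV=X$ for some finite $V$; $H$ is $G$-invariant if $T_g$ preserves $\mathrm{Dom}(H)$ and $HT_g=T_gH$. $f$ is multiplicative if $T_gf=\gamma(g^{-1})f$ for all $g\in G$ for some homomorphism $\gamma:G\to(0,\infty)$. *)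

theory Defs
  imports "HOL-Analysis.Analysis" "HOL-Library.Function_Algebras" "HOL-Algebra.Group_Action"
begin

text \<open>Pointwise real vector space structure on real-valued functions, so that the
library notions convex hull and extreme point apply to C(X) = X \<Rightarrow> real
(which carries the product topology via Function_Topology).\<close>

instantiation "fun" :: (type, real_vector) real_vector
begin
definition scaleR_fun :: "real \<Rightarrow> ('a \<Rightarrow> 'b) \<Rightarrow> 'a \<Rightarrow> 'b"
  where "scaleR_fun r f = (\<lambda>x. r *\<^sub>R f x)"
instance
  by standard (auto simp: scaleR_fun_def fun_eq_iff scaleR_add_right scaleR_add_left)
end

definition graph_bc :: "('x \<Rightarrow> 'x \<Rightarrow> real) \<Rightarrow> ('x \<Rightarrow> real) \<Rightarrow> bool" where
  "graph_bc b c \<longleftrightarrow> (\<forall>x y. b x y \<ge> 0) \<and> (\<forall>x. (\<lambda>y. b x y) summable_on UNIV)"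

definition locally_finite_graph :: "('x \<Rightarrow> 'x \<Rightarrow> real) \<Rightarrow> bool" where
  "locally_finite_graph b \<longleftrightarrow> (\<forall>x. finite {y. b x y > 0})"

definition connected_graph :: "('x \<Rightarrow> 'x \<Rightarrow> real) \<Rightarrow> bool" where
  "connected_graph b \<longleftrightarrow> (\<forall>x y. (\<lambda>u v. b u v > 0)\<^sup>*\<^sup>* x y)"

definition DomH :: "('x \<Rightarrow> 'x \<Rightarrow> real) \<Rightarrow> ('x \<Rightarrow> real) set" where
  "DomH b = {f. \<forall>x. (\<lambda>y. b x y * \<bar>f y\<bar>) summable_on UNIV}"

definition Hop :: "('x \<Rightarrow> 'x \<Rightarrow> real) \<Rightarrow> ('x \<Rightarrow> real) \<Rightarrow> ('x \<Rightarrow> real) \<Rightarrow> ('x \<Rightarrow> real)" where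
  "Hop b c f = (\<lambda>x. (\<Sum>\<^sub>\<infinity>y. b x y * (f x - f y)) + c x * f x)"

definition Hplus :: "('x \<Rightarrow> 'x \<Rightarrow> real) \<Rightarrow> ('x \<Rightarrow> real) \<Rightarrow> ('x \<Rightarrow> real) set" where
  "Hplus b c = {f \<in> DomH b. (\<forall>x. f x \<ge> 0) \<and> f \<noteq> 0 \<and> Hop b c f = 0}"

definition Tg :: "('g, 'm) monoid_scheme \<Rightarrow> ('g \<Rightarrow> 'x \<Rightarrow> 'x) \<Rightarrow> 'g \<Rightarrow> ('x \<Rightarrow> real) \<Rightarrow> ('x \<Rightarrow> real)" where
  "Tg G \<phi> g f = (\<lambda>x. f (\<phi> (inv\<^bsub>G\<^esub> g) x))"

definition cocompact :: "('g, 'm) monoid_scheme \<Rightarrow> ('g \<Rightarrow> 'x \<Rightarrow> 'x) \<Rightarrow> bool" where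
  "cocompact G \<phi> \<longleftrightarrow> (\<exists>V. finite V \<and> (\<Union>g\<in>carrier G. \<phi> g ` V) = UNIV)"

definition G_invariant :: "('g, 'm) monoid_scheme \<Rightarrow> ('g \<Rightarrow> 'x \<Rightarrow> 'x) \<Rightarrow>
    ('x \<Rightarrow> 'x \<Rightarrow> real) \<Rightarrow> ('x \<Rightarrow> real) \<Rightarrow> bool" where
  "G_invariant G \<phi> b c \<longleftrightarrow> (\<forall>g\<in>carrier G.
      Tg G \<phi> g ` DomH b \<subseteq> DomH b \<and>
      (\<forall>f\<in>DomH b. Hop b c (Tg G \<phi> g f) = Tg G \<phi> g (Hop b c f)))"

definition pos_hom :: "('g, 'm) monoid_scheme \<Rightarrow> ('g \<Rightarrow> real) \<Rightarrow> bool" where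
  "pos_hom G \<gamma> \<longleftrightarrow> (\<forall>g\<in>carrier G. \<gamma> g > 0) \<and>
     (\<forall>g\<in>carrier G. \<forall>h\<in>carrier G. \<gamma> (g \<otimes>\<^bsub>G\<^esub> h) = \<gamma> g * \<gamma> h)"

definition multiplicative :: "('g, 'm) monoid_scheme \<Rightarrow> ('g \<Rightarrow> 'x \<Rightarrow> 'x) \<Rightarrow> ('x \<Rightarrow> real) \<Rightarrow> bool" where
  "multiplicative G \<phi> f \<longleftrightarrow> (\<exists>\<gamma>. pos_hom G \<gamma> \<and>
     (\<forall>g\<in>carrier G. Tg G \<phi> g f = (\<lambda>x. \<gamma> (inv\<^bsub>G\<^esub> g) * f x)))"

end

theory Submission
  imports Defs
begin

text \<open>For \<open>g \<in> G\<close> put \<open>\<sigma> = \<phi> g\<close>, \<open>p = \<sigma> x0\<close> and \<open>q = \<sigma> p\<close>. A normalized positive harmonic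
  function \<open>f\<close> is multiplicative iff \<open>f (\<sigma> x) = f p * f x\<close> for all \<open>g\<close> and \<open>x\<close>, and then
  \<open>f q = (f p)\<^sup>2\<close>. Using a Harnack bound, these identities relax to closed convex constraints that
  hold on the closed convex hull of \<open>M\<close>: there \<open>(h p)\<^sup>2 \<le> h q\<close>, and equality forces
  \<open>h (\<sigma> x) = h p * h x\<close>.

  If \<open>f \<in> M\<close> is a proper convex combination of \<open>a1\<close> and \<open>a2\<close> from the hull, strict convexity
  of the square forces \<open>a1\<close> and \<open>a2\<close> to be multiplicative with the character of \<open>f\<close>; a
  normalized positive harmonic function with given character is unique by the minimum principle
  and cocompactness, so \<open>a1 = f = a2\<close>.

  If \<open>f\<close> is extreme, bisecting the range of \<open>m p\<close> puts \<open>f\<close> into the closed convex hull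
  of those \<open>m \<in> M\<close> with \<open>m p\<close> in an interval of length \<open>L / 2 ^ n\<close>, where \<open>m q = (m p)\<^sup>2\<close>
  lies within \<open>(L / 2 ^ n)\<^sup>2\<close> of its chord. Hence \<open>f q \<le> (f p)\<^sup>2\<close>, so equality holds and
  \<open>f\<close> is multiplicative.\<close>

section \<open>Convex hulls in the product space of real functions\<close>

lemma scaleR_fun_apply [simp]: "(r *\<^sub>R f) x = r *\<^sub>R f x"
  by (simp add: scaleR_fun_def)

lemma continuous_on_fun_apply [continuous_intros]:
  "continuous_on S (\<lambda>h :: 'a \<Rightarrow> 'b::topological_space. h x)"
  by (rule continuous_on_subset[OF continuous_on_product_coordinates]) simp

lemma convex_rescaled_sum:
  assumes "convex S" "a \<in> S" "b \<in> S" "0 \<le> p" "0 \<le> q"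
  obtains c where "c \<in> S" "p *\<^sub>R a + q *\<^sub>R b = (p + q) *\<^sub>R c"
proof (cases "p + q = 0")
  case True
  with assms have "p = 0" "q = 0" by auto
  with \<open>a \<in> S\<close> show ?thesis by (intro that) auto
next
  case False
  with assms have "0 < p + q" by auto
  let ?c = "(p / (p + q)) *\<^sub>R a + (q / (p + q)) *\<^sub>R b"
  have "?c \<in> S"
    using assms \<open>0 < p + q\<close> by (intro convexD) (auto simp flip: add_divide_distrib)
  moreover have "p *\<^sub>R a + q *\<^sub>R b = (p + q) *\<^sub>R ?c"
    using \<open>0 < p + q\<close> by (simp add: scaleR_add_right)
  ultimately show ?thesis by (rule that)
qed

lemma convex_convex_combinations:
  fixes S T :: "'a::real_vector set"
  assumes "convex S" "convex T"
  shows "convex {(1 - u) *\<^sub>R s + u *\<^sub>R t | u s t. u \<in> {0..1} \<and> s \<in> S \<and> t \<in> T}"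
    (is "convex ?D")
proof (rule convexI)
  fix x y and \<alpha> \<beta> :: real
  assume "x \<in> ?D" "y \<in> ?D" and \<alpha>\<beta>: "0 \<le> \<alpha>" "0 \<le> \<beta>" "\<alpha> + \<beta> = 1"
  then obtain u1 s1 t1 u2 s2 t2 where
    x: "x = (1 - u1) *\<^sub>R s1 + u1 *\<^sub>R t1" "u1 \<in> {0..1}" "s1 \<in> S" "t1 \<in> T" and
    y: "y = (1 - u2) *\<^sub>R s2 + u2 *\<^sub>R t2" "u2 \<in> {0..1}" "s2 \<in> S" "t2 \<in> T"
    by blast
  obtain s where s: "s \<in> S"
    "(\<alpha> * (1 - u1)) *\<^sub>R s1 + (\<beta> * (1 - u2)) *\<^sub>R s2 = (\<alpha> * (1 - u1) + \<beta> * (1 - u2)) *\<^sub>R s"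
    using convex_rescaled_sum[OF assms(1) x(3) y(3), of "\<alpha> * (1 - u1)" "\<beta> * (1 - u2)"]
      x(2) y(2) \<alpha>\<beta> by auto
  obtain t where t: "t \<in> T"
    "(\<alpha> * u1) *\<^sub>R t1 + (\<beta> * u2) *\<^sub>R t2 = (\<alpha> * u1 + \<beta> * u2) *\<^sub>R t"
    using convex_rescaled_sum[OF assms(2) x(4) y(4), of "\<alpha> * u1" "\<beta> * u2"]
      x(2) y(2) \<alpha>\<beta> by auto
  define u where "u = \<alpha> * u1 + \<beta> * u2"
  have "1 - u = \<alpha> * (1 - u1) + \<beta> * (1 - u2)"
    using \<alpha>\<beta>(3) by (simp add: u_def algebra_simps)
  have "\<alpha> *\<^sub>R x + \<beta> *\<^sub>R y =
      ((\<alpha> * (1 - u1)) *\<^sub>R s1 + (\<beta> * (1 - u2)) *\<^sub>R s2) + ((\<alpha> * u1) *\<^sub>R t1 + (\<beta> * u2) *\<^sub>R t2)"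
    unfolding x(1) y(1) by (simp add: algebra_simps)
  also have "\<dots> = (1 - u) *\<^sub>R s + u *\<^sub>R t"
    by (simp only: s(2) t(2) flip: \<open>1 - u = _\<close> u_def)
  finally have "\<alpha> *\<^sub>R x + \<beta> *\<^sub>R y = (1 - u) *\<^sub>R s + u *\<^sub>R t" .
  moreover have "u \<in> {0..1}"
    using x(2) y(2) \<alpha>\<beta> mult_left_le[of u1 \<alpha>] mult_left_le[of u2 \<beta>] by (auto simp: u_def)
  ultimately show "\<alpha> *\<^sub>R x + \<beta> *\<^sub>R y \<in> ?D"
    using s(1) t(1) by blast
qed

lemma compact_convex_combinations_fun:
  fixes S T :: "('a \<Rightarrow> real) set"
  assumes "compact S" "compact T"
  shows "compact {(1 - u) *\<^sub>R s + u *\<^sub>R t | u s t. u \<in> {0..1} \<and> s \<in> S \<and> t \<in> T}"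
proof -
  define F :: "real \<times> ('a \<Rightarrow> real) \<times> ('a \<Rightarrow> real) \<Rightarrow> 'a \<Rightarrow> real"
    where "F z = (1 - fst z) *\<^sub>R fst (snd z) + fst z *\<^sub>R snd (snd z)" for z
  have "continuous_on UNIV F"
  proof (rule continuous_on_coordinatewise_then_product)
    fix x
    have c: "continuous_on UNIV (\<lambda>z :: real \<times> ('a \<Rightarrow> real) \<times> ('a \<Rightarrow> real). fst (snd z) x)"
      "continuous_on UNIV (\<lambda>z :: real \<times> ('a \<Rightarrow> real) \<times> ('a \<Rightarrow> real). snd (snd z) x)"
      by (rule continuous_on_product_then_coordinatewise, intro continuous_intros)+
    have "continuous_on UNIV (\<lambda>z :: real \<times> ('a \<Rightarrow> real) \<times> ('a \<Rightarrow> real).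
        (1 - fst z) * fst (snd z) x + fst z * snd (snd z) x)"
      by (intro continuous_intros c)
    then show "continuous_on UNIV (\<lambda>z. F z x)"
      by (simp add: F_def)
  qed
  then have "continuous_on ({0..1} \<times> S \<times> T) F"
    by (rule continuous_on_subset) simp
  moreover have "compact ({0..1::real} \<times> S \<times> T)"
    using assms by (intro compact_Times compact_Icc)
  ultimately have "compact (F ` ({0..1} \<times> S \<times> T))"
    by (rule compact_continuous_image)
  moreover have "F ` ({0..1} \<times> S \<times> T) =
      {(1 - u) *\<^sub>R s + u *\<^sub>R t | u s t. u \<in> {0..1} \<and> s \<in> S \<and> t \<in> T}"
    unfolding F_def by force
  ultimately show ?thesis by simp
qed

lemma compact_closure_convex_hull:
  fixes Q :: "('a::countable \<Rightarrow> real) set"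
  assumes "compact Q" "convex Q" "A \<subseteq> Q"
  shows "compact (closure (convex hull A))"
proof -
  have "closure (convex hull A) \<subseteq> Q"
    using assms by (intro closure_minimal hull_minimal compact_imp_closed)
  then show ?thesis
    using compact_Int_closed[OF assms(1) closed_closure, of "convex hull A"] by (simp add: Int_absorb1)
qed

lemma extreme_point_of_subset:
  "x extreme_point_of S \<Longrightarrow> x \<in> T \<Longrightarrow> T \<subseteq> S \<Longrightarrow> x extreme_point_of T"
  unfolding extreme_point_of_def by blast

lemma extreme_point_of_convex_combination:
  assumes "x extreme_point_of S" "a \<in> S" "b \<in> S" "u \<in> {0..1}" "x = (1 - u) *\<^sub>R a + u *\<^sub>R b"
  shows "x = a \<or> x = b"
proof (cases "a = b \<or> u = 0 \<or> u = 1")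
  case True
  then show ?thesis
    by (elim disjE) (simp_all add: assms(5))
next
  case False
  with assms(4,5) have "x \<in> open_segment a b"
    by (auto simp: in_segment intro!: exI[of _ u])
  with assms(1-3) show ?thesis
    unfolding extreme_point_of_def by blast
qed

lemma closure_convex_hull_Un_subset:
  fixes A B Q :: "('a::countable \<Rightarrow> real) set"
  assumes Q: "compact Q" "convex Q" "A \<subseteq> Q" "B \<subseteq> Q" and "A \<noteq> {}" "B \<noteq> {}"
  shows "closure (convex hull (A \<union> B)) \<subseteq>
    {(1 - u) *\<^sub>R a + u *\<^sub>R b | u a b. u \<in> {0..1} \<and> a \<in> closure (convex hull A) \<and> b \<in> closure (convex hull B)}"
    (is "_ \<subseteq> ?D")
proof -
  define E where "E = {(1 - u) *\<^sub>R a + u *\<^sub>R b | u a b.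
    u \<in> {0..1} \<and> a \<in> convex hull A \<and> b \<in> convex hull B}"
  have "closed ?D"
    using compact_closure_convex_hull[OF Q(1,2,3)] compact_closure_convex_hull[OF Q(1,2,4)]
    by (intro compact_imp_closed compact_convex_combinations_fun)
  have "E \<subseteq> ?D"
    unfolding E_def using closure_subset by blast
  obtain a0 b0 where "a0 \<in> convex hull A" "b0 \<in> convex hull B"
    using \<open>A \<noteq> {}\<close> \<open>B \<noteq> {}\<close> by (meson ex_in_conv hull_subset subset_iff)
  have "A \<subseteq> E"
  proof
    fix a assume "a \<in> A"
    with \<open>b0 \<in> convex hull B\<close> show "a \<in> E"
      unfolding E_def by (intro CollectI exI[of _ 0] exI[of _ a] exI[of _ b0]) (auto intro: hull_inc)
  qed
  moreover have "B \<subseteq> E"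
  proof
    fix b assume "b \<in> B"
    with \<open>a0 \<in> convex hull A\<close> show "b \<in> E"
      unfolding E_def by (intro CollectI exI[of _ 1] exI[of _ a0] exI[of _ b]) (auto intro: hull_inc)
  qed
  moreover have "convex E"
    unfolding E_def by (intro convex_convex_combinations convex_convex_hull)
  ultimately have "convex hull (A \<union> B) \<subseteq> E"
    by (intro hull_minimal) auto
  with \<open>E \<subseteq> ?D\<close> \<open>closed ?D\<close> show ?thesis
    by (intro closure_minimal) auto
qed

text \<open>A weak form of Milman's converse to the Krein--Milman theorem.\<close>

lemma extreme_point_of_closure_convex_hull_Un:
  fixes A B Q :: "('a::countable \<Rightarrow> real) set"
  assumes Q: "compact Q" "convex Q" "A \<subseteq> Q" "B \<subseteq> Q"
    and f: "f extreme_point_of closure (convex hull (A \<union> B))"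
  shows "f extreme_point_of closure (convex hull A) \<or> f extreme_point_of closure (convex hull B)"
proof (cases "A = {} \<or> B = {}")
  case True
  with f show ?thesis by auto
next
  case False
  define C where "C = closure (convex hull (A \<union> B))"
  define CA where "CA = closure (convex hull A)"
  define CB where "CB = closure (convex hull B)"
  have "f \<in> C"
    using f unfolding C_def extreme_point_of_def by blast
  with closure_convex_hull_Un_subset[OF Q] False obtain u a b
    where fab: "f = (1 - u) *\<^sub>R a + u *\<^sub>R b" "u \<in> {0..1}" "a \<in> CA" "b \<in> CB"
    unfolding C_def CA_def CB_def by blast
  have "CA \<subseteq> C" "CB \<subseteq> C"
    unfolding CA_def CB_def C_def by (intro closure_mono hull_mono; blast)+
  with fab f have "f = a \<or> f = b"
    by (intro extreme_point_of_convex_combination[of f C]) (auto simp: C_def)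
  then show ?thesis
  proof
    assume "f = a"
    with fab(3) have "f extreme_point_of CA"
      using extreme_point_of_subset[OF f[folded C_def] _ \<open>CA \<subseteq> C\<close>] by simp
    then show ?thesis
      unfolding CA_def ..
  next
    assume "f = b"
    with fab(4) have "f extreme_point_of CB"
      using extreme_point_of_subset[OF f[folded C_def] _ \<open>CB \<subseteq> C\<close>] by simp
    then show ?thesis
      unfolding CB_def ..
  qed
qed

lemma closure_convex_hull_chord_bound:
  fixes A :: "('a \<Rightarrow> real) set"
  assumes A: "\<forall>m\<in>A. m q = (m p)\<^sup>2 \<and> lo \<le> m p \<and> m p \<le> hi"
    and f: "f \<in> closure (convex hull A)"
  shows "f q - (f p)\<^sup>2 \<le> (hi - lo)\<^sup>2"
proof -
  define S where "S = {h. h q \<le> (lo + hi) * h p - lo * hi \<and> lo \<le> h p \<and> h p \<le> hi}"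
  have "closed S"
    unfolding S_def by (intro closed_Collect_conj closed_Collect_le continuous_intros)
  moreover have "convex S"
  proof (rule convexI)
    fix h1 h2 and \<alpha> \<beta> :: real
    assume "h1 \<in> S" "h2 \<in> S" "0 \<le> \<alpha>" "0 \<le> \<beta>" "\<alpha> + \<beta> = 1"
    then have "\<alpha> * h1 q + \<beta> * h2 q \<le> \<alpha> * ((lo + hi) * h1 p - lo * hi) + \<beta> * ((lo + hi) * h2 p - lo * hi)"
      "\<alpha> * lo + \<beta> * lo \<le> \<alpha> * h1 p + \<beta> * h2 p" "\<alpha> * h1 p + \<beta> * h2 p \<le> \<alpha> * hi + \<beta> * hi"
      unfolding S_def by (intro add_mono mult_left_mono; simp)+
    moreover have "\<beta> = 1 - \<alpha>"
      using \<open>\<alpha> + \<beta> = 1\<close> by simp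
    ultimately show "\<alpha> *\<^sub>R h1 + \<beta> *\<^sub>R h2 \<in> S"
      unfolding S_def by (simp only:) (simp add: algebra_simps)
  qed
  moreover have "A \<subseteq> S"
  proof
    fix m assume "m \<in> A"
    with A have "m q = (m p)\<^sup>2" "lo \<le> m p" "m p \<le> hi" by auto
    moreover from this have "(m p - lo) * (m p - hi) \<le> 0"
      by (intro mult_nonneg_nonpos) auto
    ultimately show "m \<in> S"
      unfolding S_def by (simp add: algebra_simps power2_eq_square)
  qed
  ultimately have "closure (convex hull A) \<subseteq> S"
    by (intro closure_minimal hull_minimal)
  with f have fS: "f q \<le> (lo + hi) * f p - lo * hi" "lo \<le> f p" "f p \<le> hi"
    unfolding S_def by auto
  from fS(1) have "f q - (f p)\<^sup>2 \<le> (f p - lo) * (hi - f p)"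
    by (simp add: algebra_simps power2_eq_square)
  also from fS(2,3) have "\<dots> \<le> (hi - lo) * (hi - lo)"
    by (intro mult_mono) auto
  finally show ?thesis
    by (simp add: power2_eq_square)
qed

lemma extreme_point_of_closure_convex_hull_dyadic_slice:
  fixes A Q :: "('a::countable \<Rightarrow> real) set"
  assumes Q: "compact Q" "convex Q" "A \<subseteq> Q" and A: "\<forall>m\<in>A. 0 \<le> m p \<and> m p \<le> L"
    and f: "f extreme_point_of closure (convex hull A)"
  shows "\<exists>lo. f extreme_point_of closure (convex hull {m \<in> A. lo \<le> m p \<and> m p \<le> lo + L / 2 ^ n})"
proof (induction n)
  case 0
  from A have "{m \<in> A. 0 \<le> m p \<and> m p \<le> 0 + L / 2 ^ 0} = A"
    by auto
  with f show ?case
    by (intro exI[of _ 0]) (simp only:)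
next
  case (Suc n)
  then obtain lo where lo: "f extreme_point_of closure (convex hull {m \<in> A. lo \<le> m p \<and> m p \<le> lo + L / 2 ^ n})"
    by blast
  define d where "d = L / 2 ^ Suc n"
  define S where "S lo' = {m \<in> A. lo' \<le> m p \<and> m p \<le> lo' + d}" for lo'
  have "{m \<in> A. lo \<le> m p \<and> m p \<le> lo + L / 2 ^ n} = S lo \<union> S (lo + d)"
    by (auto simp: S_def d_def)
  with lo have "f extreme_point_of closure (convex hull (S lo \<union> S (lo + d)))"
    by simp
  moreover have "S lo \<subseteq> Q" "S (lo + d) \<subseteq> Q"
    using Q(3) by (auto simp: S_def)
  ultimately have "f extreme_point_of closure (convex hull S lo) \<or> f extreme_point_of closure (convex hull S (lo + d))"
    using extreme_point_of_closure_convex_hull_Un[OF Q(1,2)] by blast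
  then show ?case
    unfolding S_def d_def by (elim disjE) (rule exI, assumption)+
qed

lemma extreme_point_of_closure_convex_hull_parabola:
  fixes A Q :: "('a::countable \<Rightarrow> real) set"
  assumes Q: "compact Q" "convex Q" "A \<subseteq> Q"
    and A: "\<forall>m\<in>A. m q = (m p)\<^sup>2 \<and> 0 \<le> m p \<and> m p \<le> L"
    and f: "f extreme_point_of closure (convex hull A)"
  shows "f q \<le> (f p)\<^sup>2"
proof -
  have "f q - (f p)\<^sup>2 \<le> (L / 2 ^ n)\<^sup>2" for n
  proof -
    from A have "\<forall>m\<in>A. 0 \<le> m p \<and> m p \<le> L"
      by blast
    then obtain lo where
      "f extreme_point_of closure (convex hull {m \<in> A. lo \<le> m p \<and> m p \<le> lo + L / 2 ^ n})"
      using extreme_point_of_closure_convex_hull_dyadic_slice[OF Q _ f] by blast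
    then have "f q - (f p)\<^sup>2 \<le> (lo + L / 2 ^ n - lo)\<^sup>2"
      using A by (intro closure_convex_hull_chord_bound[of "{m \<in> A. lo \<le> m p \<and> m p \<le> lo + L / 2 ^ n}"])
        (auto simp: extreme_point_of_def)
    then show ?thesis by simp
  qed
  moreover have "(\<lambda>n. (L / 2 ^ n)\<^sup>2) \<longlonglongrightarrow> 0"
    using tendsto_power[OF LIMSEQ_divide_realpow_zero[of 2 L], of 2] by simp
  ultimately have "f q - (f p)\<^sup>2 \<le> 0"
    using LIMSEQ_le_const by blast
  then show ?thesis by simp
qed

section \<open>A convex envelope of eigenfunctions\<close>

lemma convex_combination_square_gap:
  fixes t s1 s2 q1 q2 :: real
  shows "(1 - t) * q1 + t * q2 - ((1 - t) * s1 + t * s2)\<^sup>2 =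
    (1 - t) * (q1 - s1\<^sup>2) + t * (q2 - s2\<^sup>2) + t * (1 - t) * (s1 - s2)\<^sup>2"
  by (simp add: algebra_simps power2_eq_square)

lemma convex_combination_square_le:
  fixes t s1 s2 q1 q2 :: real
  assumes "t \<in> {0..1}" "s1\<^sup>2 \<le> q1" "s2\<^sup>2 \<le> q2"
  shows "((1 - t) * s1 + t * s2)\<^sup>2 \<le> (1 - t) * q1 + t * q2"
  using convex_combination_square_gap[of t q1 q2 s1 s2] assms
  by (smt (verit) atLeastAtMost_iff mult_nonneg_nonneg zero_le_power2)

lemma convex_combination_square_eq:
  fixes t s1 s2 q1 q2 :: real
  assumes "t \<in> {0<..<1}" "s1\<^sup>2 \<le> q1" "s2\<^sup>2 \<le> q2"
    and "(1 - t) * q1 + t * q2 = ((1 - t) * s1 + t * s2)\<^sup>2"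
  shows "s1 = s2" "q1 = s1\<^sup>2" "q2 = s2\<^sup>2"
proof -
  have "0 \<le> (1 - t) * (q1 - s1\<^sup>2)" "0 \<le> t * (q2 - s2\<^sup>2)" "0 \<le> t * (1 - t) * (s1 - s2)\<^sup>2"
    using assms(1-3) by auto
  moreover have "(1 - t) * (q1 - s1\<^sup>2) + t * (q2 - s2\<^sup>2) + t * (1 - t) * (s1 - s2)\<^sup>2 = 0"
    using convex_combination_square_gap[of t q1 q2 s1 s2] assms(4) by simp
  ultimately have "(1 - t) * (q1 - s1\<^sup>2) = 0" "t * (q2 - s2\<^sup>2) = 0" "t * (1 - t) * (s1 - s2)\<^sup>2 = 0"
    by linarith+
  with assms(1) show "s1 = s2" "q1 = s1\<^sup>2" "q2 = s2\<^sup>2"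
    by auto
qed

text \<open>For an eigenfunction, \<open>h (\<sigma> v) = a * h v\<close> for all \<open>v\<close>, one has \<open>second_moment \<sigma> x0 h l = (a - l)\<^sup>2\<close>
  with \<open>a = h (\<sigma> x0)\<close>, and \<open>(h (\<sigma> v) - l * h v)\<^sup>2 = (a - l)\<^sup>2 * (h v)\<^sup>2\<close>. The envelope keeps
  the consequences of these identities that survive convex combinations.\<close>

definition second_moment :: "('a \<Rightarrow> 'a) \<Rightarrow> 'a \<Rightarrow> ('a \<Rightarrow> real) \<Rightarrow> real \<Rightarrow> real" where
  "second_moment \<sigma> x0 h l = h (\<sigma> (\<sigma> x0)) - 2 * l * h (\<sigma> x0) + l\<^sup>2"

definition eigen_envelope :: "('a \<Rightarrow> 'a) \<Rightarrow> 'a \<Rightarrow> ('a \<Rightarrow> real) \<Rightarrow> ('a \<Rightarrow> real) set" where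
  "eigen_envelope \<sigma> x0 B = {h. \<forall>l. 0 \<le> second_moment \<sigma> x0 h l \<and>
     (\<forall>v. (h (\<sigma> v) - l * h v)\<^sup>2 \<le> (B v)\<^sup>2 * second_moment \<sigma> x0 h l)}"

lemma second_moment_eigenfunction:
  assumes "\<forall>v. h (\<sigma> v) = h (\<sigma> x0) * h v"
  shows "second_moment \<sigma> x0 h l = (h (\<sigma> x0) - l)\<^sup>2"
  using assms[rule_format, of "\<sigma> x0"] by (simp add: second_moment_def power2_eq_square algebra_simps)

lemma second_moment_convex_combination:
  "second_moment \<sigma> x0 ((1 - t) *\<^sub>R h1 + t *\<^sub>R h2) l =
    (1 - t) * second_moment \<sigma> x0 h1 l + t * second_moment \<sigma> x0 h2 l"
  by (simp add: second_moment_def algebra_simps)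

lemma continuous_on_second_moment [continuous_intros]:
  "continuous_on S (\<lambda>h. second_moment \<sigma> x0 h l)"
  unfolding second_moment_def by (intro continuous_intros)

lemma closed_eigen_envelope: "closed (eigen_envelope \<sigma> x0 B)"
  unfolding eigen_envelope_def
  by (intro closed_Collect_all closed_Collect_conj closed_Collect_le continuous_intros)

lemma convex_eigen_envelope: "convex (eigen_envelope \<sigma> x0 B)"
  unfolding convex_alt
proof (intro ballI allI impI)
  fix h1 h2 and t :: real
  assume h: "h1 \<in> eigen_envelope \<sigma> x0 B" "h2 \<in> eigen_envelope \<sigma> x0 B" and t: "0 \<le> t \<and> t \<le> 1"
  let ?h = "(1 - t) *\<^sub>R h1 + t *\<^sub>R h2"
  have "0 \<le> second_moment \<sigma> x0 ?h l" for l
    using h t unfolding eigen_envelope_def second_moment_convex_combination by simp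
  moreover have "(?h (\<sigma> v) - l * ?h v)\<^sup>2 \<le> (B v)\<^sup>2 * second_moment \<sigma> x0 ?h l" for v l
  proof -
    have "(?h (\<sigma> v) - l * ?h v)\<^sup>2 = ((1 - t) * (h1 (\<sigma> v) - l * h1 v) + t * (h2 (\<sigma> v) - l * h2 v))\<^sup>2"
      by (simp add: algebra_simps)
    also have "\<dots> \<le> (1 - t) * ((B v)\<^sup>2 * second_moment \<sigma> x0 h1 l) + t * ((B v)\<^sup>2 * second_moment \<sigma> x0 h2 l)"
      using h t unfolding eigen_envelope_def by (intro convex_combination_square_le) auto
    also have "\<dots> = (B v)\<^sup>2 * second_moment \<sigma> x0 ?h l"
      unfolding second_moment_convex_combination by (simp add: algebra_simps)
    finally show ?thesis .
  qed
  ultimately show "?h \<in> eigen_envelope \<sigma> x0 B"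
    unfolding eigen_envelope_def by blast
qed

lemma eigenfunction_in_eigen_envelope:
  assumes "\<forall>v. h (\<sigma> v) = h (\<sigma> x0) * h v" "\<forall>v. \<bar>h v\<bar> \<le> B v"
  shows "h \<in> eigen_envelope \<sigma> x0 B"
proof -
  have "(h (\<sigma> v) - l * h v)\<^sup>2 \<le> (B v)\<^sup>2 * (h (\<sigma> x0) - l)\<^sup>2" for v l
  proof -
    have "(h v)\<^sup>2 \<le> (B v)\<^sup>2"
      using assms(2) abs_le_square_iff[of "h v" "B v"] by (smt (verit) power2_abs)
    then have "(h v)\<^sup>2 * (h (\<sigma> x0) - l)\<^sup>2 \<le> (B v)\<^sup>2 * (h (\<sigma> x0) - l)\<^sup>2"
      by (intro mult_right_mono) auto
    moreover have "(h (\<sigma> v) - l * h v)\<^sup>2 = (h v)\<^sup>2 * (h (\<sigma> x0) - l)\<^sup>2"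
      using assms(1)[rule_format, of v] by (simp add: power2_eq_square algebra_simps)
    ultimately show ?thesis by simp
  qed
  then show ?thesis
    unfolding eigen_envelope_def using second_moment_eigenfunction[OF assms(1)] by simp
qed

lemma eigen_envelope_square_le:
  assumes "h \<in> eigen_envelope \<sigma> x0 B"
  shows "(h (\<sigma> x0))\<^sup>2 \<le> h (\<sigma> (\<sigma> x0))"
  using assms unfolding eigen_envelope_def second_moment_def
  by (auto simp: power2_eq_square dest: spec[of _ "h (\<sigma> x0)"])

lemma eigen_envelope_eigenfunction:
  assumes "h \<in> eigen_envelope \<sigma> x0 B" "h (\<sigma> (\<sigma> x0)) = (h (\<sigma> x0))\<^sup>2"
  shows "h (\<sigma> v) = h (\<sigma> x0) * h v"
proof -
  have "second_moment \<sigma> x0 h (h (\<sigma> x0)) = 0"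
    using assms(2) by (simp add: second_moment_def power2_eq_square)
  moreover from assms(1) have
    "(h (\<sigma> v) - h (\<sigma> x0) * h v)\<^sup>2 \<le> (B v)\<^sup>2 * second_moment \<sigma> x0 h (h (\<sigma> x0))"
    unfolding eigen_envelope_def by blast
  ultimately show ?thesis by simp
qed

lemma eigen_envelope_segment:
  assumes "a1 \<in> eigen_envelope \<sigma> x0 B" "a2 \<in> eigen_envelope \<sigma> x0 B" "t \<in> {0<..<1}"
    and f: "f = (1 - t) *\<^sub>R a1 + t *\<^sub>R a2" "f (\<sigma> (\<sigma> x0)) = (f (\<sigma> x0))\<^sup>2"
  shows "a1 (\<sigma> v) = f (\<sigma> x0) * a1 v" "a2 (\<sigma> v) = f (\<sigma> x0) * a2 v"
proof -
  have "(1 - t) * a1 (\<sigma> (\<sigma> x0)) + t * a2 (\<sigma> (\<sigma> x0)) = ((1 - t) * a1 (\<sigma> x0) + t * a2 (\<sigma> x0))\<^sup>2"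
    using f by simp
  with assms(3) eigen_envelope_square_le[OF assms(1)] eigen_envelope_square_le[OF assms(2)]
  have eq: "a1 (\<sigma> x0) = a2 (\<sigma> x0)"
      "a1 (\<sigma> (\<sigma> x0)) = (a1 (\<sigma> x0))\<^sup>2" "a2 (\<sigma> (\<sigma> x0)) = (a2 (\<sigma> x0))\<^sup>2"
    by (rule convex_combination_square_eq)+
  moreover have "f (\<sigma> x0) = a1 (\<sigma> x0)"
    using eq(1) unfolding f(1) by (simp add: algebra_simps)
  ultimately show "a1 (\<sigma> v) = f (\<sigma> x0) * a1 v" "a2 (\<sigma> v) = f (\<sigma> x0) * a2 v"
    using eigen_envelope_eigenfunction[OF assms(1) eq(2), of v] eigen_envelope_eigenfunction[OF assms(2) eq(3), of v]
    by simp_all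
qed

section \<open>Positive harmonic functions\<close>

text \<open>On a locally finite graph \<open>Hop\<close> is a finite sum; in this form it is continuous in \<open>f\<close>
  for the product topology.\<close>

definition H_local :: "('x \<Rightarrow> 'x \<Rightarrow> real) \<Rightarrow> ('x \<Rightarrow> real) \<Rightarrow> ('x \<Rightarrow> real) \<Rightarrow> 'x \<Rightarrow> real" where
  "H_local b c f x = (\<Sum>y | 0 < b x y. b x y * (f x - f y)) + c x * f x"

definition harmonic :: "('x \<Rightarrow> 'x \<Rightarrow> real) \<Rightarrow> ('x \<Rightarrow> real) \<Rightarrow> ('x \<Rightarrow> real) \<Rightarrow> bool" where
  "harmonic b c f \<longleftrightarrow> (\<forall>x. H_local b c f x = 0)"

definition normalized_harmonic :: "('x \<Rightarrow> 'x \<Rightarrow> real) \<Rightarrow> ('x \<Rightarrow> real) \<Rightarrow> 'x \<Rightarrow> ('x \<Rightarrow> real) set" where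
  "normalized_harmonic b c x0 = {f. harmonic b c f \<and> (\<forall>x. 0 \<le> f x) \<and> f x0 = 1}"

lemma finite_neighbours: "locally_finite_graph b \<Longrightarrow> finite {y. 0 < b x y}"
  by (simp add: locally_finite_graph_def)

lemma Hop_eq_H_local:
  assumes "graph_bc b c" "locally_finite_graph b"
  shows "Hop b c f = H_local b c f"
proof
  fix x
  have "b x y = 0" if "y \<notin> {y. 0 < b x y}" for y
    using assms(1) that by (simp add: graph_bc_def order.strict_iff_order)
  then have "(\<Sum>\<^sub>\<infinity>y. b x y * (f x - f y)) = (\<Sum>\<^sub>\<infinity>y\<in>{y. 0 < b x y}. b x y * (f x - f y))"
    by (intro infsum_cong_neutral) auto
  with finite_neighbours[OF assms(2)] show "Hop b c f x = H_local b c f x"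
    unfolding Hop_def H_local_def by simp
qed

lemma DomH_eq_UNIV:
  assumes "graph_bc b c" "locally_finite_graph b"
  shows "DomH b = UNIV"
proof -
  have "(\<lambda>y. b x y * \<bar>f y\<bar>) summable_on UNIV" for f x
  proof -
    have "b x y = 0" if "y \<notin> {y. 0 < b x y}" for y
      using assms(1) that by (simp add: graph_bc_def order.strict_iff_order)
    then have "(\<lambda>y. b x y * \<bar>f y\<bar>) summable_on UNIV \<longleftrightarrow> (\<lambda>y. b x y * \<bar>f y\<bar>) summable_on {y. 0 < b x y}"
      by (intro summable_on_cong_neutral) auto
    with finite_neighbours[OF assms(2)] show ?thesis by simp
  qed
  then show ?thesis
    unfolding DomH_def by blast
qed

lemma Hplus_normalized_eq:
  assumes "graph_bc b c" "locally_finite_graph b"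
  shows "{f \<in> Hplus b c. f x0 = 1} = normalized_harmonic b c x0"
  using Hop_eq_H_local[OF assms] DomH_eq_UNIV[OF assms]
  by (auto simp: Hplus_def normalized_harmonic_def harmonic_def fun_eq_iff intro!: exI[of _ x0])

lemma H_local_lincomb:
  "H_local b c (\<lambda>x. u * f x + v * g x) x = u * H_local b c f x + v * H_local b c g x"
  unfolding H_local_def by (simp add: algebra_simps sum.distrib sum_distrib_left sum_subtractf)

lemma harmonic_lincomb:
  "harmonic b c f \<Longrightarrow> harmonic b c g \<Longrightarrow> harmonic b c (\<lambda>x. u * f x + v * g x)"
  by (simp add: harmonic_def H_local_lincomb)

lemma continuous_on_H_local [continuous_intros]: "continuous_on S (\<lambda>f. H_local b c f x)"
  unfolding H_local_def by (intro continuous_intros)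

lemma closed_normalized_harmonic: "closed (normalized_harmonic b c x0)"
  unfolding normalized_harmonic_def harmonic_def
  by (intro closed_Collect_conj closed_Collect_all closed_Collect_eq closed_Collect_le continuous_intros)

lemma convex_normalized_harmonic: "convex (normalized_harmonic b c x0)"
  unfolding convex_alt
proof (intro ballI allI impI)
  fix f g and t :: real
  assume "f \<in> normalized_harmonic b c x0" "g \<in> normalized_harmonic b c x0" "0 \<le> t \<and> t \<le> 1"
  moreover have "(1 - t) *\<^sub>R f + t *\<^sub>R g = (\<lambda>x. (1 - t) * f x + t * g x)"
    by (simp add: fun_eq_iff)
  ultimately show "(1 - t) *\<^sub>R f + t *\<^sub>R g \<in> normalized_harmonic b c x0"
    unfolding normalized_harmonic_def by (auto intro: harmonic_lincomb)
qed

text \<open>Minimum principle: at a zero of a nonnegative harmonic function \<open>f\<close>,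
  \<open>H_local b c f x = - (\<Sum>y | 0 < b x y. b x y * f y)\<close> is a vanishing sum of nonnegative terms.\<close>

lemma harmonic_nonneg_zero_neighbour:
  assumes "locally_finite_graph b" "harmonic b c f" "\<forall>x. 0 \<le> f x" "f x = 0" "0 < b x y"
  shows "f y = 0"
proof -
  from assms(2) have "H_local b c f x = 0"
    by (simp add: harmonic_def)
  with assms(4) have "(\<Sum>z | 0 < b x z. b x z * f z) = 0"
    by (simp add: H_local_def sum_negf)
  with assms(3) finite_neighbours[OF assms(1)] have "\<forall>z \<in> {z. 0 < b x z}. b x z * f z = 0"
    by (subst sum_nonneg_eq_0_iff[symmetric]) auto
  with assms(5) show ?thesis by simp
qed

lemma harmonic_nonneg_zero_everywhere:
  assumes "locally_finite_graph b" "connected_graph b" "harmonic b c f" "\<forall>x. 0 \<le> f x" "f x = 0"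
  shows "f y = 0"
proof -
  from assms(2) have "(\<lambda>u v. 0 < b u v)\<^sup>*\<^sup>* x y"
    by (simp add: connected_graph_def)
  then show ?thesis
  proof (induction rule: rtranclp_induct)
    case base
    show ?case using assms(5) .
  next
    case (step y z)
    show ?case
      using harmonic_nonneg_zero_neighbour[OF assms(1,3,4) step.IH step.hyps(2)] .
  qed
qed

lemma normalized_harmonic_pos:
  assumes "locally_finite_graph b" "connected_graph b" "f \<in> normalized_harmonic b c x0"
  shows "0 < f x"
proof (rule ccontr)
  assume "\<not> 0 < f x"
  with assms(3) have "f x = 0"
    by (simp add: normalized_harmonic_def order.strict_iff_order)
  with assms have "f x0 = 0"
    using harmonic_nonneg_zero_everywhere[OF assms(1,2), of c f x x0]
    by (simp add: normalized_harmonic_def)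
  with assms(3) show False
    by (simp add: normalized_harmonic_def)
qed

text \<open>Harnack inequality, propagated along a path from \<open>x0\<close>: along an edge \<open>x \<rightarrow> y\<close>,
  \<open>b x y * f y \<le> (\<Sum>z | 0 < b x z. b x z * f z)\<close>, and harmonicity at \<open>x\<close> expresses the sum
  through \<open>f x\<close>.\<close>

lemma normalized_harmonic_bounded_at:
  assumes "locally_finite_graph b" "connected_graph b"
  shows "\<exists>C. \<forall>f \<in> normalized_harmonic b c x0. f v \<le> C"
proof -
  from assms(2) have "(\<lambda>u v. 0 < b u v)\<^sup>*\<^sup>* x0 v"
    by (simp add: connected_graph_def)
  then show ?thesis
  proof (induction rule: rtranclp_induct)
    case base
    show ?case by (auto simp: normalized_harmonic_def)
  next
    case (step x y)
    from step.IH obtain C where C: "\<forall>f \<in> normalized_harmonic b c x0. f x \<le> C" by blast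
    define D where "D = (\<Sum>z | 0 < b x z. b x z) + c x"
    have "f y \<le> \<bar>D\<bar> * C / b x y" if f: "f \<in> normalized_harmonic b c x0" for f
    proof -
      have "H_local b c f x = 0" and f_nonneg: "\<forall>z. 0 \<le> f z"
        using f by (simp_all add: normalized_harmonic_def harmonic_def)
      then have "(\<Sum>z | 0 < b x z. b x z * f z) = D * f x"
        unfolding H_local_def D_def
        by (simp add: algebra_simps sum_subtractf sum_distrib_left sum_distrib_right)
      moreover have "b x y * f y \<le> (\<Sum>z | 0 < b x z. b x z * f z)"
        using f_nonneg step.hyps(2) finite_neighbours[OF assms(1)] by (intro member_le_sum) auto
      moreover have "D * f x \<le> \<bar>D\<bar> * f x" "\<bar>D\<bar> * f x \<le> \<bar>D\<bar> * C"
        using f_nonneg C f by (auto intro: mult_right_mono mult_left_mono)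
      ultimately show ?thesis
        using step.hyps(2) by (simp add: field_simps)
    qed
    then show ?case by blast
  qed
qed

lemma normalized_harmonic_bounded:
  assumes "locally_finite_graph b" "connected_graph b"
  obtains B where "\<forall>f \<in> normalized_harmonic b c x0. \<forall>v. f v \<le> B v"
  using normalized_harmonic_bounded_at[OF assms, of c x0] by metis

lemma compact_normalized_harmonic:
  assumes "locally_finite_graph b" "connected_graph b"
  shows "compact (normalized_harmonic b c x0)"
proof -
  obtain B where B: "\<forall>f \<in> normalized_harmonic b c x0. \<forall>v. f v \<le> B v"
    using normalized_harmonic_bounded[OF assms] .
  have "compact (Pi\<^sub>E UNIV (\<lambda>x. {0..B x}))"
    using compactin_PiE[of "\<lambda>_. euclidean" UNIV "\<lambda>x. {0..B x}"]
    by (simp add: euclidean_product_topology)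
  then have "compact (Pi\<^sub>E UNIV (\<lambda>x. {0..B x}) \<inter> normalized_harmonic b c x0)"
    by (intro compact_Int_closed closed_normalized_harmonic)
  moreover have "normalized_harmonic b c x0 \<subseteq> Pi\<^sub>E UNIV (\<lambda>x. {0..B x})"
    using B by (auto simp: normalized_harmonic_def)
  ultimately show ?thesis
    by (simp add: inf.absorb2)
qed

lemma normalized_harmonic_eq_if_le:
  assumes "locally_finite_graph b" "connected_graph b"
    and f: "f \<in> normalized_harmonic b c x0" and u: "u \<in> normalized_harmonic b c x0"
    and le: "\<forall>x. u x \<le> R * f x" and eq: "u v = R * f v"
  shows "u = f"
proof -
  define w where "w x = R * f x + (-1) * u x" for x
  have "harmonic b c w"
    using f u unfolding w_def normalized_harmonic_def by (intro harmonic_lincomb) auto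
  moreover have "\<forall>x. 0 \<le> w x" "w v = 0"
    using le eq by (auto simp: w_def)
  ultimately have "w x = 0" for x
    using assms(1,2) harmonic_nonneg_zero_everywhere by metis
  moreover from this[of x0] f u have "R = 1"
    by (simp add: w_def normalized_harmonic_def)
  ultimately show "u = f"
    by (simp add: w_def fun_eq_iff)
qed

section \<open>Multiplicative harmonic functions\<close>

text \<open>Uniqueness of a normalized positive harmonic function with a given character \<open>\<gamma>\<close>:
  cocompactness makes \<open>u / f\<close> attain its maximum \<open>R\<close>, and \<open>R * f - u\<close> is then a
  nonnegative harmonic function with a zero.\<close>

lemma normalized_harmonic_character_unique:
  assumes "locally_finite_graph b" "connected_graph b" "cocompact G \<phi>"
    and f: "f \<in> normalized_harmonic b c x0" and u: "u \<in> normalized_harmonic b c x0"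
    and \<gamma>: "\<forall>g\<in>carrier G. 0 \<le> \<gamma> g"
    and f_char: "\<forall>g\<in>carrier G. \<forall>x. f (\<phi> g x) = \<gamma> g * f x"
    and u_char: "\<forall>g\<in>carrier G. \<forall>x. u (\<phi> g x) = \<gamma> g * u x"
  shows "u = f"
proof -
  obtain V where V: "finite V" "(\<Union>g\<in>carrier G. \<phi> g ` V) = UNIV"
    using assms(3) by (auto simp: cocompact_def)
  then have "V \<noteq> {}" by auto
  define R where "R = Max ((\<lambda>v. u v / f v) ` V)"
  have "R \<in> (\<lambda>v. u v / f v) ` V"
    unfolding R_def using V(1) \<open>V \<noteq> {}\<close> by (intro Max_in) auto
  then obtain v where v: "v \<in> V" "u v / f v = R"
    by auto
  have f_pos: "0 < f x" for x
    using assms(1,2) f by (rule normalized_harmonic_pos)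
  have "u x \<le> R * f x" for x
  proof -
    from V(2) obtain g w where g: "g \<in> carrier G" "w \<in> V" "x = \<phi> g w" by blast
    have "u w / f w \<le> R"
      unfolding R_def using V(1) g(2) by simp
    then have "u w \<le> R * f w"
      using f_pos[of w] by (simp add: divide_le_eq)
    then have "\<gamma> g * u w \<le> \<gamma> g * (R * f w)"
      using g(1) \<gamma> by (intro mult_left_mono) auto
    moreover from g f_char u_char have "u x = \<gamma> g * u w" "f x = \<gamma> g * f w"
      by simp_all
    ultimately show ?thesis
      by (simp add: mult.left_commute)
  qed
  moreover have "u v = R * f v"
    using v(2) f_pos[of v] by (simp add: field_simps)
  ultimately show ?thesis
    using normalized_harmonic_eq_if_le[OF assms(1,2) f u] by blast
qed

lemma multiplicative_iff:
  assumes "group G" "group_action G UNIV \<phi>" "\<And>x. 0 < f x" "f x0 = 1"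
  shows "multiplicative G \<phi> f \<longleftrightarrow> (\<forall>g\<in>carrier G. \<forall>x. f (\<phi> g x) = f (\<phi> g x0) * f x)"
proof
  assume "multiplicative G \<phi> f"
  then obtain \<gamma> where \<gamma>: "\<forall>g\<in>carrier G. Tg G \<phi> g f = (\<lambda>x. \<gamma> (inv\<^bsub>G\<^esub> g) * f x)"
    unfolding multiplicative_def by blast
  have "f (\<phi> g x) = \<gamma> g * f x" if "g \<in> carrier G" for g x
  proof -
    from assms(1) that have "inv\<^bsub>G\<^esub> g \<in> carrier G" "inv\<^bsub>G\<^esub> (inv\<^bsub>G\<^esub> g) = g"
      by (simp_all add: group.inv_closed group.inv_inv)
    with \<gamma> have "Tg G \<phi> (inv\<^bsub>G\<^esub> g) f = (\<lambda>x. \<gamma> g * f x)"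
      by simp
    with \<open>inv\<^bsub>G\<^esub> (inv\<^bsub>G\<^esub> g) = g\<close> show ?thesis
      by (simp add: Tg_def fun_eq_iff)
  qed
  with assms(4) show "\<forall>g\<in>carrier G. \<forall>x. f (\<phi> g x) = f (\<phi> g x0) * f x"
    by (metis mult.right_neutral)
next
  assume char: "\<forall>g\<in>carrier G. \<forall>x. f (\<phi> g x) = f (\<phi> g x0) * f x"
  define \<gamma> where "\<gamma> g = f (\<phi> g x0)" for g
  have "pos_hom G \<gamma>"
    unfolding pos_hom_def
  proof (intro conjI ballI)
    fix g h assume g: "g \<in> carrier G" and h: "h \<in> carrier G"
    then have "\<phi> (g \<otimes>\<^bsub>G\<^esub> h) x0 = \<phi> g (\<phi> h x0)"
      using group_action.composition_rule[OF assms(2)] by simp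
    with char[rule_format, OF g, of "\<phi> h x0"] show "\<gamma> (g \<otimes>\<^bsub>G\<^esub> h) = \<gamma> g * \<gamma> h"
      by (simp add: \<gamma>_def)
  qed (simp add: \<gamma>_def assms(3))
  moreover have "Tg G \<phi> g f = (\<lambda>x. \<gamma> (inv\<^bsub>G\<^esub> g) * f x)" if "g \<in> carrier G" for g
  proof -
    from assms(1) that have "inv\<^bsub>G\<^esub> g \<in> carrier G"
      by (rule group.inv_closed)
    with char have "f (\<phi> (inv\<^bsub>G\<^esub> g) x) = \<gamma> (inv\<^bsub>G\<^esub> g) * f x" for x
      unfolding \<gamma>_def by blast
    then show ?thesis
      by (simp add: Tg_def)
  qed
  ultimately show "multiplicative G \<phi> f"
    unfolding multiplicative_def by blast
qed

definition multiplicative_harmonic ::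
    "('x \<Rightarrow> 'x \<Rightarrow> real) \<Rightarrow> ('x \<Rightarrow> real) \<Rightarrow> ('g, 'm) monoid_scheme \<Rightarrow> ('g \<Rightarrow> 'x \<Rightarrow> 'x) \<Rightarrow> 'x \<Rightarrow> ('x \<Rightarrow> real) set" where
  "multiplicative_harmonic b c G \<phi> x0 =
    {f \<in> normalized_harmonic b c x0. \<forall>g\<in>carrier G. \<forall>x. f (\<phi> g x) = f (\<phi> g x0) * f x}"

definition harmonic_envelope ::
    "('x \<Rightarrow> 'x \<Rightarrow> real) \<Rightarrow> ('x \<Rightarrow> real) \<Rightarrow> ('g, 'm) monoid_scheme \<Rightarrow> ('g \<Rightarrow> 'x \<Rightarrow> 'x) \<Rightarrow> 'x \<Rightarrow>
      ('x \<Rightarrow> real) \<Rightarrow> ('x \<Rightarrow> real) set" where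
  "harmonic_envelope b c G \<phi> x0 B =
    normalized_harmonic b c x0 \<inter> (\<Inter>g\<in>carrier G. eigen_envelope (\<phi> g) x0 B)"

lemma compact_harmonic_envelope:
  assumes "locally_finite_graph b" "connected_graph b"
  shows "compact (harmonic_envelope b c G \<phi> x0 B)"
  unfolding harmonic_envelope_def
  using assms by (intro compact_Int_closed compact_normalized_harmonic closed_INT ballI closed_eigen_envelope)

lemma closed_harmonic_envelope: "closed (harmonic_envelope b c G \<phi> x0 B)"
  unfolding harmonic_envelope_def
  by (intro closed_Int closed_normalized_harmonic closed_INT ballI closed_eigen_envelope)

lemma convex_harmonic_envelope: "convex (harmonic_envelope b c G \<phi> x0 B)"
  unfolding harmonic_envelope_def
  by (intro convex_Int convex_INT convex_normalized_harmonic convex_eigen_envelope)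

lemma closure_convex_hull_multiplicative_harmonic_subset:
  assumes "locally_finite_graph b" "connected_graph b"
    and B: "\<forall>f \<in> normalized_harmonic b c x0. \<forall>v. f v \<le> B v"
  shows "closure (convex hull multiplicative_harmonic b c G \<phi> x0) \<subseteq> harmonic_envelope b c G \<phi> x0 B"
proof (intro closure_minimal hull_minimal subsetI)
  fix f assume "f \<in> multiplicative_harmonic b c G \<phi> x0"
  then have f_NH: "f \<in> normalized_harmonic b c x0"
    and f_char: "\<forall>g\<in>carrier G. \<forall>x. f (\<phi> g x) = f (\<phi> g x0) * f x"
    unfolding multiplicative_harmonic_def by blast+
  have "\<forall>v. \<bar>f v\<bar> \<le> B v"
    using f_NH B by (auto simp: normalized_harmonic_def)
  then have "f \<in> eigen_envelope (\<phi> g) x0 B" if "g \<in> carrier G" for g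
    using f_char that by (intro eigenfunction_in_eigen_envelope) blast+
  with f_NH show "f \<in> harmonic_envelope b c G \<phi> x0 B"
    unfolding harmonic_envelope_def by blast
qed (rule closed_harmonic_envelope convex_harmonic_envelope)+

lemma multiplicative_harmonic_extreme_point:
  assumes "locally_finite_graph b" "connected_graph b" "cocompact G \<phi>"
    and B: "\<forall>f \<in> normalized_harmonic b c x0. \<forall>v. f v \<le> B v"
    and f: "f \<in> multiplicative_harmonic b c G \<phi> x0"
  shows "f extreme_point_of closure (convex hull multiplicative_harmonic b c G \<phi> x0)"
    (is "f extreme_point_of ?C")
proof -
  have f_NH: "f \<in> normalized_harmonic b c x0"
    and f_char: "\<forall>g\<in>carrier G. \<forall>x. f (\<phi> g x) = f (\<phi> g x0) * f x"
    using f unfolding multiplicative_harmonic_def by blast+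
  have "f \<notin> open_segment a1 a2" if a: "a1 \<in> ?C" "a2 \<in> ?C" for a1 a2
  proof
    assume "f \<in> open_segment a1 a2"
    then obtain t where t: "t \<in> {0<..<1}" "f = (1 - t) *\<^sub>R a1 + t *\<^sub>R a2" and "a1 \<noteq> a2"
      by (auto simp: in_segment)
    have a_HE: "a1 \<in> harmonic_envelope b c G \<phi> x0 B" "a2 \<in> harmonic_envelope b c G \<phi> x0 B"
      using a closure_convex_hull_multiplicative_harmonic_subset[OF assms(1,2) B] by blast+
    have "a1 (\<phi> g x) = f (\<phi> g x0) * a1 x \<and> a2 (\<phi> g x) = f (\<phi> g x0) * a2 x"
      if g: "g \<in> carrier G" for g x
    proof -
      have "f (\<phi> g (\<phi> g x0)) = (f (\<phi> g x0))\<^sup>2"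
        using f_char[rule_format, OF g, of "\<phi> g x0"] by (simp add: power2_eq_square)
      moreover have "a1 \<in> eigen_envelope (\<phi> g) x0 B" "a2 \<in> eigen_envelope (\<phi> g) x0 B"
        using a_HE g by (simp_all add: harmonic_envelope_def)
      ultimately show ?thesis
        using eigen_envelope_segment[OF _ _ t(1,2), of "\<phi> g" x0 B] by blast
    qed
    moreover have "\<forall>g\<in>carrier G. 0 \<le> f (\<phi> g x0)"
      using f_NH by (simp add: normalized_harmonic_def)
    moreover have "a1 \<in> normalized_harmonic b c x0" "a2 \<in> normalized_harmonic b c x0"
      using a_HE by (simp_all add: harmonic_envelope_def)
    ultimately have "a1 = f" "a2 = f"
      by (auto intro: normalized_harmonic_character_unique[OF assms(1-3) f_NH _ _ f_char])
    with \<open>a1 \<noteq> a2\<close> show False by simp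
  qed
  moreover have "f \<in> ?C"
    using f by (meson closure_subset hull_inc subsetD)
  ultimately show ?thesis
    unfolding extreme_point_of_def by blast
qed

lemma extreme_point_multiplicative_harmonic:
  fixes b :: "'x::countable \<Rightarrow> 'x \<Rightarrow> real"
  assumes "locally_finite_graph b" "connected_graph b"
    and B: "\<forall>f \<in> normalized_harmonic b c x0. \<forall>v. f v \<le> B v"
    and f: "f extreme_point_of closure (convex hull multiplicative_harmonic b c G \<phi> x0)"
  shows "f \<in> multiplicative_harmonic b c G \<phi> x0"
proof -
  let ?M = "multiplicative_harmonic b c G \<phi> x0" and ?W = "harmonic_envelope b c G \<phi> x0 B"
  have W: "closure (convex hull ?M) \<subseteq> ?W"
    by (rule closure_convex_hull_multiplicative_harmonic_subset[OF assms(1,2) B])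
  moreover have "?M \<subseteq> closure (convex hull ?M)"
    by (meson closure_subset hull_subset subset_trans)
  ultimately have "?M \<subseteq> ?W"
    by (rule order.trans[rotated])
  from f W have "f \<in> ?W"
    unfolding extreme_point_of_def by blast
  have W_compact: "compact ?W"
    by (rule compact_harmonic_envelope[OF assms(1,2)])
  have W_convex: "convex ?W"
    by (rule convex_harmonic_envelope)
  have "f (\<phi> g x) = f (\<phi> g x0) * f x" if g: "g \<in> carrier G" for g x
  proof -
    let ?p = "\<phi> g x0"
    have "\<forall>m\<in>?M. m (\<phi> g ?p) = (m ?p)\<^sup>2 \<and> 0 \<le> m ?p \<and> m ?p \<le> B ?p"
    proof
      fix m assume "m \<in> ?M"
      then have m_NH: "m \<in> normalized_harmonic b c x0"
        and m_char: "\<forall>g\<in>carrier G. \<forall>x. m (\<phi> g x) = m (\<phi> g x0) * m x"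
        unfolding multiplicative_harmonic_def by blast+
      show "m (\<phi> g ?p) = (m ?p)\<^sup>2 \<and> 0 \<le> m ?p \<and> m ?p \<le> B ?p"
        using m_NH m_char[rule_format, OF g, of ?p] B[rule_format, OF m_NH, of ?p]
        by (simp add: normalized_harmonic_def power2_eq_square)
    qed
    then have "f (\<phi> g ?p) \<le> (f ?p)\<^sup>2"
      by (rule extreme_point_of_closure_convex_hull_parabola[OF W_compact W_convex \<open>?M \<subseteq> ?W\<close> _ f])
    moreover have env: "f \<in> eigen_envelope (\<phi> g) x0 B"
      using \<open>f \<in> ?W\<close> g by (simp add: harmonic_envelope_def)
    moreover from env have "(f ?p)\<^sup>2 \<le> f (\<phi> g ?p)"
      by (rule eigen_envelope_square_le)
    ultimately have "f (\<phi> g ?p) = (f ?p)\<^sup>2"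
      by simp
    with env show ?thesis
      by (rule eigen_envelope_eigenfunction)
  qed
  with \<open>f \<in> ?W\<close> show ?thesis
    unfolding harmonic_envelope_def multiplicative_harmonic_def by blast
qed

theorem lemma10:
  fixes b :: "'x::countable \<Rightarrow> 'x \<Rightarrow> real" and c :: "'x \<Rightarrow> real"
    and G :: "('g, 'm) monoid_scheme" and \<phi> :: "'g \<Rightarrow> 'x \<Rightarrow> 'x" and x0 :: 'x
    and K M :: "('x \<Rightarrow> real) set"
  assumes "graph_bc b c" and "locally_finite_graph b" and "connected_graph b"
    and "group G" and "group_action G UNIV \<phi>" and "cocompact G \<phi>"
    and "G_invariant G \<phi> b c"
    and K_def: "K = closure {f \<in> Hplus b c. f x0 = 1}"
    and M_def: "M = {f \<in> K. multiplicative G \<phi> f}"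
  shows "M = {f. f extreme_point_of (closure (convex hull M))}"
proof -
  have "K = normalized_harmonic b c x0"
    using K_def Hplus_normalized_eq[OF assms(1,2)] closure_closed[OF closed_normalized_harmonic] by simp
  moreover have "multiplicative G \<phi> f \<longleftrightarrow> (\<forall>g\<in>carrier G. \<forall>x. f (\<phi> g x) = f (\<phi> g x0) * f x)"
    if "f \<in> normalized_harmonic b c x0" for f
    using that by (intro multiplicative_iff[OF assms(4,5) normalized_harmonic_pos[OF assms(2,3) that]])
      (simp add: normalized_harmonic_def)
  ultimately have M: "M = multiplicative_harmonic b c G \<phi> x0"
    unfolding M_def multiplicative_harmonic_def by blast
  obtain B where B: "\<forall>f \<in> normalized_harmonic b c x0. \<forall>v. f v \<le> B v"
    using normalized_harmonic_bounded[OF assms(2,3)] .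
  have "f \<in> multiplicative_harmonic b c G \<phi> x0 \<longleftrightarrow>
      f extreme_point_of closure (convex hull multiplicative_harmonic b c G \<phi> x0)" for f
    using multiplicative_harmonic_extreme_point[OF assms(2,3,6) B]
      extreme_point_multiplicative_harmonic[OF assms(2,3) B] by blast
  then show ?thesis
    unfolding M by blast
qed

end
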